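(* Consider the excludable public good problem, and let $\mathcal A$ be the VCG-based mechanism with a normalized, monotone, symmetric function $H:2^N\to\mathbb{R}_{\ge0}$. Suppose that $\mathcal A$ always covers the incurred cost and is a $\rho$-approximation to the social cost for some finite $\rho$. Then for every nonempty $S\subseteq N$ and every $i\in S$, $H(S)-H(S\setminus\{i\})\ge\frac1{|S|}$.
   Context: Excludable public good problem: players $N=\{1,\dots,n\}$, each player $i$ has a private value $v_i\ge0$ for being served; an outcome is a set $S\subseteq N$ of served players; the cost is $C(S)=1$ for $S\ne\emptyset$ and $C(\emptyset)=0$. $H$ is normalized if $H(\emptyset)=0$, monotone if $S\subseteq T\Rightarrow H(S)\le H(T)$, symmetric if $H(S)=H(T)$ whenever $|S|=|T|$. The VCG-based mechanism with $H$ outputs $ALG\in\arg\max_{S\subseteq N}\sum_{i\in S}v_i-H(S)$ (some tie-breaking), for each $i$ computes $ALG^{-i}\in\arg\max_{S\subseteq N\setminus\{i\}}\sum_{j\in S}v_j-H(S)$, and charges $p_i=\left[\sum_{j\in ALG^{-i}}v_j-H(ALG^{-i})\right]-\left[\sum_{j\in ALG\setminus\{i\}}v_j-H(ALG)\right]$. It always covers the cost if $\sum_ip_i\ge C(ALG)$ for every profile. Social cost: $\pi(S)=C(S)+\sum_{i\notin S}v_i$; a $\rho$-approximation means $\pi(ALG)\le\rho\min_T\pi(T)$ on every profile. *)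

theory Defs
  imports Complex_Main
begin

definition players :: "nat \<Rightarrow> nat set" where
  "players n = {1..n}"

definition valid_profile :: "nat \<Rightarrow> (nat \<Rightarrow> real) \<Rightarrow> bool" where
  "valid_profile n v \<longleftrightarrow> (\<forall>i\<in>players n. v i \<ge> 0)"

definition cost :: "nat set \<Rightarrow> real" where
  "cost S = (if S = {} then 0 else 1)"

definition welfareH :: "(nat \<Rightarrow> real) \<Rightarrow> (nat set \<Rightarrow> real) \<Rightarrow> nat set \<Rightarrow> real" where
  "welfareH v H S = (\<Sum>j\<in>S. v j) - H S"

definition is_argmax :: "nat set \<Rightarrow> (nat \<Rightarrow> real) \<Rightarrow> (nat set \<Rightarrow> real) \<Rightarrow> nat set \<Rightarrow> bool" where
  "is_argmax M v H S \<longleftrightarrow> S \<subseteq> M \<and> (\<forall>T. T \<subseteq> M \<longrightarrow> welfareH v H T \<le> welfareH v H S)"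

definition payment :: "(nat \<Rightarrow> real) \<Rightarrow> (nat set \<Rightarrow> real) \<Rightarrow> nat set \<Rightarrow> nat set \<Rightarrow> nat \<Rightarrow> real" where
  "payment v H ALG ALGmi i = welfareH v H ALGmi - ((\<Sum>j\<in>ALG - {i}. v j) - H ALG)"

definition social_cost :: "nat \<Rightarrow> (nat \<Rightarrow> real) \<Rightarrow> nat set \<Rightarrow> real" where
  "social_cost n v S = cost S + (\<Sum>i\<in>players n - S. v i)"

end

theory Submission
  imports Defs
begin

text \<open>Give every player of S the same value c, larger than H(N), and nobody else anything.
  Then the mechanism serves a nonempty set, and the welfare of any set avoiding a player
  j \<in> S is at most c(|S| - 1) - H(S - {j}), so j pays at most H S - H(S - {j}) and the
  others pay nothing.  By symmetry all these marginals equal H S - H(S - {i}), so covering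
  the cost 1 forces |S| (H S - H(S - {i})) \<ge> 1.\<close>

definition uniform_profile :: "real \<Rightarrow> nat set \<Rightarrow> nat \<Rightarrow> real" where
  "uniform_profile c S j = (if j \<in> S then c else 0)"

lemma sum_uniform_profile:
  "finite T \<Longrightarrow> sum (uniform_profile c S) T = c * real (card (T \<inter> S))"
  by (simp add: uniform_profile_def sum.If_cases)

lemma welfare_uniform_profile_self:
  "finite S \<Longrightarrow> welfareH (uniform_profile c S) H S = c * real (card S) - H S"
  by (simp add: welfareH_def sum_uniform_profile)

lemma payment_le_welfare_loss:
  assumes "finite A" and "0 \<le> v j"
  shows "payment v H A T j \<le> welfareH v H T - welfareH v H A + v j"
proof -
  have "sum v A \<le> sum v (A - {j}) + v j"
    using assms by (cases "j \<in> A") (simp_all add: sum.remove)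
  then show ?thesis
    unfolding payment_def welfareH_def by simp
qed

lemma argmax_uniform_profile_nonempty:
  assumes "is_argmax M (uniform_profile c S) H A" and "S \<subseteq> M" and "finite S" and "S \<noteq> {}"
    and "H {} = 0" and "0 \<le> H S" and "H S < c"
  shows "A \<noteq> {}"
proof
  assume "A = {}"
  then have "welfareH (uniform_profile c S) H S \<le> 0"
    using assms(1,2,5) by (auto simp: is_argmax_def welfareH_def)
  moreover have "c \<le> c * real (card S)"
    using assms(3,4,6,7) by (simp add: Suc_le_eq card_gt_0_iff mult_le_cancel_left1)
  ultimately show False
    using assms(7) welfare_uniform_profile_self[OF assms(3)] by simp
qed

text \<open>Either T contains all of S - {j}, and then monotonicity of H gives the bound, or T
  misses a second player of S, and the lost value c \<ge> H(S - {j}) pays for it.\<close>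

lemma welfare_uniform_profile_avoiding:
  assumes "finite S" and "finite T" and "j \<in> S" and "T \<inter> S \<subseteq> S - {j}"
    and mono: "H (T \<inter> S) \<le> H T" and nonneg: "0 \<le> H (T \<inter> S)"
    and c: "H (S - {j}) \<le> c" and c_nonneg: "0 \<le> c"
  shows "welfareH (uniform_profile c S) H T \<le> c * (real (card S) - 1) - H (S - {j})"
proof (cases "T \<inter> S = S - {j}")
  case True
  have "1 \<le> card S"
    using assms(1,3) by (auto simp: Suc_le_eq card_gt_0_iff)
  with True show ?thesis
    using assms(1-3) mono
    by (simp add: welfareH_def sum_uniform_profile Int_commute of_nat_diff)
next
  case False
  then have "card (T \<inter> S) < card (S - {j})"
    using assms(1,4) by (meson finite_Diff psubsetI psubset_card_mono)
  then have "real (card (T \<inter> S)) \<le> real (card S) - 2"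
    using assms(1,3) by (simp add: card_gt_0_iff)
  then have "c * real (card (T \<inter> S)) \<le> c * (real (card S) - 2)"
    using c_nonneg by (simp add: mult_left_mono)
  then show ?thesis
    using assms(2) mono nonneg c
    by (simp add: welfareH_def sum_uniform_profile algebra_simps)
qed

lemma payment_uniform_profile_le:
  fixes c :: real and S :: "nat set" and v :: "nat \<Rightarrow> real"
  defines "v \<equiv> uniform_profile c S"
  assumes "finite M" and "S \<subseteq> M"
    and mono: "\<And>A B. A \<subseteq> B \<Longrightarrow> B \<subseteq> M \<Longrightarrow> H A \<le> H B"
    and nonneg: "\<And>A. A \<subseteq> M \<Longrightarrow> 0 \<le> H A"
    and c: "H M \<le> c"
    and A: "is_argmax M v H A" and T: "is_argmax (M - {j}) v H T"
  shows "payment v H A T j \<le> (if j \<in> S then H S - H (S - {j}) else 0)"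
proof -
  have "A \<subseteq> M" and "T \<subseteq> M - {j}"
    using A T by (simp_all add: is_argmax_def)
  then have fin: "finite A" "finite T" and T_le_A: "welfareH v H T \<le> welfareH v H A"
    using A \<open>finite M\<close> by (auto simp: is_argmax_def intro: finite_subset)
  have "0 \<le> c"
    using c nonneg[of M] by simp
  then have pay: "payment v H A T j \<le> welfareH v H T - welfareH v H A + v j"
    using fin by (intro payment_le_welfare_loss) (simp_all add: v_def uniform_profile_def)
  show ?thesis
  proof (cases "j \<in> S")
    case False
    then show ?thesis
      using pay T_le_A by (simp add: v_def uniform_profile_def)
  next
    case True
    have "finite S"
      using \<open>finite M\<close> \<open>S \<subseteq> M\<close> finite_subset by blast
    have "welfareH v H T \<le> c * (real (card S) - 1) - H (S - {j})"
      unfolding v_def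
    proof (rule welfare_uniform_profile_avoiding)
      show "H (T \<inter> S) \<le> H T" "0 \<le> H (T \<inter> S)"
        using \<open>T \<subseteq> M - {j}\<close> mono[of "T \<inter> S" T] nonneg[of "T \<inter> S"] by auto
      show "H (S - {j}) \<le> c"
        using mono[of "S - {j}" M] \<open>S \<subseteq> M\<close> c by fastforce
    qed (use True \<open>finite S\<close> fin \<open>T \<subseteq> M - {j}\<close> \<open>0 \<le> c\<close> in auto)
    moreover have "welfareH v H S \<le> welfareH v H A"
      using A \<open>S \<subseteq> M\<close> by (simp add: is_argmax_def)
    ultimately show ?thesis
      using pay True welfare_uniform_profile_self[OF \<open>finite S\<close>]
      by (simp add: v_def uniform_profile_def algebra_simps)
  qed
qed

theorem claim5p2:
  fixes n :: nat
    and H :: "nat set \<Rightarrow> real"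
    and alg :: "(nat \<Rightarrow> real) \<Rightarrow> nat set"
    and alg_minus :: "(nat \<Rightarrow> real) \<Rightarrow> nat \<Rightarrow> nat set"
    and \<rho> :: real
  assumes H_nonneg: "\<forall>S. S \<subseteq> players n \<longrightarrow> H S \<ge> 0"
    and H_normalized: "H {} = 0"
    and H_monotone: "\<forall>S T. S \<subseteq> T \<and> T \<subseteq> players n \<longrightarrow> H S \<le> H T"
    and H_symmetric: "\<forall>S T. S \<subseteq> players n \<and> T \<subseteq> players n \<and> card S = card T \<longrightarrow> H S = H T"
    and alg_opt: "\<forall>v. valid_profile n v \<longrightarrow> is_argmax (players n) v H (alg v)"
    and alg_minus_opt: "\<forall>v i. valid_profile n v \<and> i \<in> players n \<longrightarrow>
                           is_argmax (players n - {i}) v H (alg_minus v i)"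
    and covers_cost: "\<forall>v. valid_profile n v \<longrightarrow>
           (\<Sum>i\<in>players n. payment v H (alg v) (alg_minus v i) i) \<ge> cost (alg v)"
    and approx: "\<forall>v. valid_profile n v \<longrightarrow>
           social_cost n v (alg v) \<le> \<rho> * Min (social_cost n v ` Pow (players n))"
  shows "\<forall>S i. S \<subseteq> players n \<and> S \<noteq> {} \<and> i \<in> S \<longrightarrow>
           H S - H (S - {i}) \<ge> 1 / real (card S)"
proof (intro allI impI)
  fix S i
  assume "S \<subseteq> players n \<and> S \<noteq> {} \<and> i \<in> S"
  then have S: "S \<subseteq> players n" "S \<noteq> {}" "i \<in> S" by auto
  have fin: "finite (players n)" "finite S"
    using S(1) finite_subset by (auto simp: players_def)
  define c where "c = H (players n) + 1"
  define v where "v = uniform_profile c S"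
  define d where "d = H S - H (S - {i})"
  have mono: "\<And>A B. A \<subseteq> B \<Longrightarrow> B \<subseteq> players n \<Longrightarrow> H A \<le> H B"
    using H_monotone by blast
  have nonneg: "\<And>A. A \<subseteq> players n \<Longrightarrow> 0 \<le> H A"
    using H_nonneg by blast
  have valid: "valid_profile n v"
    using H_nonneg by (simp add: valid_profile_def v_def uniform_profile_def c_def)
  have "alg v \<noteq> {}"
    unfolding v_def
  proof (rule argmax_uniform_profile_nonempty[where H = H, OF _ S(1) fin(2) S(2) H_normalized])
    show "H S < c"
      using mono[OF S(1) order_refl] by (simp add: c_def)
  qed (use alg_opt valid H_nonneg S(1) in \<open>auto simp: v_def\<close>)
  then have "1 \<le> (\<Sum>j\<in>players n. payment v H (alg v) (alg_minus v j) j)"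
    using covers_cost[rule_format, OF valid] by (simp add: cost_def)
  also have "\<dots> \<le> (\<Sum>j\<in>players n. if j \<in> S then d else 0)"
  proof (rule sum_mono)
    fix j assume "j \<in> players n"
    have "payment v H (alg v) (alg_minus v j) j \<le> (if j \<in> S then H S - H (S - {j}) else 0)"
      unfolding v_def
      by (rule payment_uniform_profile_le[OF fin(1) S(1) mono nonneg])
        (use alg_opt alg_minus_opt valid \<open>j \<in> players n\<close> in \<open>auto simp: v_def c_def\<close>)
    moreover have "H (S - {j}) = H (S - {i})" if "j \<in> S"
      using H_symmetric[rule_format, of "S - {j}" "S - {i}"] S fin(2) that by auto
    ultimately show "payment v H (alg v) (alg_minus v j) j \<le> (if j \<in> S then d else 0)"
      by (auto simp: d_def)
  qed
  also have "\<dots> = real (card S) * d"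
    using S(1) fin(1) by (simp add: sum.If_cases Int_absorb1)
  finally show "H S - H (S - {i}) \<ge> 1 / real (card S)"
    using fin(2) S(2) by (simp add: d_def divide_le_eq mult.commute)
qed

end
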